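(* For any weight $\omega\in\mathbb{R}^J$ with $\mathscr{T}_\omega=\mathscr{T}_{\max}$, the leading term ideal of $I_\mathcal{A}$ with respect to $\omega$ equals the Stanley–Reisner ideal of $\Sigma$, i.e. the ideal of $\mathbb{C}[y_{i,j}:(i,j)\in J]$ generated by the monomials $\prod_{(i,j)\in\mathcal{P}}y_{i,j}$ for $\mathcal{P}$ a primitive collection of $\Sigma$.
   Context: $N\cong\mathbb{Z}^n$, $M$ dual. $X$ smooth projective toric with fan $\Sigma$ and nef-partition $\Sigma(1)=I_1\sqcup\cdots\sqcup I_r$ (each $E_i=\sum_{\rho\in I_i}D_\rho$ nef), $I_i=\{\rho_{i,1},\dots,\rho_{i,n_i}\}$, $J=\{(i,j):1\le i\le r,0\le j\le n_i\}$, $\nu_{i,j}=(\rho_{i,j},e_i)$ ($j\ge1$), $\nu_{i,0}=(0,e_i)$ in $N\times\mathbb{Z}^r$, $\mathcal{A}=\{\nu_{i,j}\}$, $L_{\mathrm{ext}}=\ker(\mathbb{Z}^J\to N\times\mathbb{Z}^r,\ e_{i,j}\mapsto\nu_{i,j})$. Toric ideal $I_\mathcal{A}=\langle y^{\ell^+}-y^{\ell^-}:\ell\in L_{\mathrm{ext}}\rangle$, $\ell=\ell^+-\ell^-$ with $\ell^\pm\ge0$ of disjoint support; $\omega\in\mathbb{R}^J$ defines leading terms by maximal weight $\sum\omega_{i,j}m_{i,j}$ of $y^m$. $\mathscr{T}_\omega$ is the regular subdivision of $\mathcal{A}$ induced by $\omega$ (projection of lower faces of $\mathrm{Cone}\{(\nu,\omega_\nu)\}$);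 $\mathscr{T}_{\max}$ is the triangulation with maximal simplices $\{\nu_{1,0},\dots,\nu_{r,0}\}\cup\{\nu_{i,j}:\rho_{i,j}\in\sigma(1)\}$, $\sigma$ maximal in $\Sigma$. A primitive collection is $\mathcal{P}\subset\Sigma(1)$ not spanning a cone of $\Sigma$ while every proper subset does. *)

theory Defs
  imports "HOL-Analysis.Analysis" "HOL-Library.Poly_Mapping"
begin

text \<open>Parts of the nef-partition are indexed by i in {1..r}; the rays of I_i are
  indexed by pairs (i,j), 1 <= j <= nn i; the extra points nu_{i,0} by (i,0).\<close>

definition Jset :: "nat \<Rightarrow> (nat \<Rightarrow> nat) \<Rightarrow> (nat \<times> nat) set" where
  "Jset r nn = {(i,j). 1 \<le> i \<and> i \<le> r \<and> j \<le> nn i}"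

definition Rays :: "nat \<Rightarrow> (nat \<Rightarrow> nat) \<Rightarrow> (nat \<times> nat) set" where
  "Rays r nn = {(i,j). 1 \<le> i \<and> i \<le> r \<and> 1 \<le> j \<and> j \<le> nn i}"

definition rv :: "int ^ 'n \<Rightarrow> real ^ 'n" where
  "rv v = (\<chi> k. real_of_int (v $ k))"

section \<open>Fans (cones recorded by their sets of ray indices)\<close>

definition cone_of :: "(nat \<times> nat \<Rightarrow> int ^ 'n) \<Rightarrow> (nat \<times> nat) set \<Rightarrow> (real ^ 'n) set" where
  "cone_of \<rho> \<sigma> = {(\<Sum>k\<in>\<sigma>. c k *\<^sub>R rv (\<rho> k)) | c. \<forall>k\<in>\<sigma>. c k \<ge> 0}"

definition z_basis :: "(int ^ 'n) set \<Rightarrow> bool" where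
  "z_basis B \<longleftrightarrow> finite B \<and> inj_on rv B \<and> independent (rv ` B) \<and>
     (\<forall>v :: int ^ 'n. \<exists>c. v = (\<Sum>b\<in>B. c b *s b))"

definition is_fan :: "(nat \<times> nat \<Rightarrow> int ^ 'n) \<Rightarrow> (nat \<times> nat) set \<Rightarrow> (nat \<times> nat) set set \<Rightarrow> bool" where
  "is_fan \<rho> R cones \<longleftrightarrow> finite R \<and> finite cones \<and> (\<forall>\<sigma>\<in>cones. \<sigma> \<subseteq> R) \<and>
     (\<forall>\<sigma>\<in>cones. \<forall>\<tau>. \<tau> \<subseteq> \<sigma> \<longrightarrow> \<tau> \<in> cones) \<and>
     (\<forall>k\<in>R. {k} \<in> cones) \<and>
     (\<forall>\<sigma>\<in>cones. \<forall>\<tau>\<in>cones. cone_of \<rho> \<sigma> \<inter> cone_of \<rho> \<tau> = cone_of \<rho> (\<sigma> \<inter> \<tau>))"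

definition smooth_fan :: "(nat \<times> nat \<Rightarrow> int ^ 'n) \<Rightarrow> (nat \<times> nat) set \<Rightarrow> (nat \<times> nat) set set \<Rightarrow> bool" where
  "smooth_fan \<rho> R cones \<longleftrightarrow> inj_on \<rho> R \<and> (\<forall>\<sigma>\<in>cones. \<exists>B. z_basis B \<and> \<rho> ` \<sigma> \<subseteq> B)"

definition complete_fan :: "(nat \<times> nat \<Rightarrow> int ^ 'n) \<Rightarrow> (nat \<times> nat) set set \<Rightarrow> bool" where
  "complete_fan \<rho> cones \<longleftrightarrow> (\<Union>\<sigma>\<in>cones. cone_of \<rho> \<sigma>) = UNIV"

definition maximal_cone :: "(nat \<times> nat) set set \<Rightarrow> (nat \<times> nat) set \<Rightarrow> bool" where
  "maximal_cone cones \<sigma> \<longleftrightarrow> \<sigma> \<in> cones \<and> (\<forall>\<tau>\<in>cones. \<sigma> \<subseteq> \<tau> \<longrightarrow> \<tau> = \<sigma>)"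

text \<open>Projective: there is an ample divisor sum a_rho D_rho, i.e. one with strictly convex
  support function: for every maximal cone sigma some m_sigma has
  <m_sigma,u_rho> = -a_rho on sigma(1) and > -a_rho off sigma(1).\<close>
definition projective_fan :: "(nat \<times> nat \<Rightarrow> int ^ 'n) \<Rightarrow> (nat \<times> nat) set \<Rightarrow> (nat \<times> nat) set set \<Rightarrow> bool" where
  "projective_fan \<rho> R cones \<longleftrightarrow> (\<exists>a :: nat \<times> nat \<Rightarrow> int. \<forall>\<sigma>. maximal_cone cones \<sigma> \<longrightarrow>
     (\<exists>m :: real ^ 'n. (\<forall>k\<in>\<sigma>. m \<bullet> rv (\<rho> k) = - real_of_int (a k)) \<and>
                       (\<forall>k\<in>R - \<sigma>. m \<bullet> rv (\<rho> k) > - real_of_int (a k))))"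

definition nef_divisor :: "(nat \<times> nat \<Rightarrow> int ^ 'n) \<Rightarrow> (nat \<times> nat) set \<Rightarrow> (nat \<times> nat) set set \<Rightarrow> (nat \<times> nat \<Rightarrow> int) \<Rightarrow> bool" where
  "nef_divisor \<rho> R cones a \<longleftrightarrow> (\<forall>\<sigma>. maximal_cone cones \<sigma> \<longrightarrow>
     (\<exists>m :: real ^ 'n. (\<forall>k\<in>\<sigma>. m \<bullet> rv (\<rho> k) = - real_of_int (a k)) \<and>
                       (\<forall>k\<in>R. m \<bullet> rv (\<rho> k) \<ge> - real_of_int (a k))))"

text \<open>Nef-partition: each E_i = sum of D_rho for rho in I_i = {(i,j) : 1 <= j <= nn i} is nef.\<close>
definition nef_partition :: "(nat \<times> nat \<Rightarrow> int ^ 'n) \<Rightarrow> nat \<Rightarrow> (nat \<Rightarrow> nat) \<Rightarrow> (nat \<times> nat) set set \<Rightarrow> bool" where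
  "nef_partition \<rho> r nn cones \<longleftrightarrow> (\<forall>i\<in>{1..r}.
     nef_divisor \<rho> (Rays r nn) cones (\<lambda>k. if fst k = i then 1 else 0))"

definition primitive_collection :: "(nat \<times> nat) set \<Rightarrow> (nat \<times> nat) set set \<Rightarrow> (nat \<times> nat) set \<Rightarrow> bool" where
  "primitive_collection R cones P \<longleftrightarrow> P \<subseteq> R \<and> P \<notin> cones \<and> (\<forall>Q. Q \<subset> P \<longrightarrow> Q \<in> cones)"

text \<open>N-component of nu_{i,j}: rho_{i,j} for j >= 1 and 0 for j = 0; the Z^r-component is e_i.\<close>
definition nuN :: "(nat \<times> nat \<Rightarrow> int ^ 'n) \<Rightarrow> nat \<times> nat \<Rightarrow> int ^ 'n" where
  "nuN \<rho> k = (if snd k = 0 then 0 else \<rho> k)"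

text \<open>Cells (as index sets) of the regular subdivision T_omega: projections of the lower faces
  of Cone{(nu,omega_nu)}, i.e. sets F \<subseteq> J cut out by a linear functional (u,w) on
  N_R x R^r with <(u,w),nu_k> <= omega_k for all k in J, with equality exactly on F.\<close>
definition reg_subdiv :: "(nat \<times> nat \<Rightarrow> int ^ 'n) \<Rightarrow> nat \<Rightarrow> (nat \<Rightarrow> nat) \<Rightarrow> (nat \<times> nat \<Rightarrow> real) \<Rightarrow> (nat \<times> nat) set set" where
  "reg_subdiv \<rho> r nn \<omega> = {F. F \<subseteq> Jset r nn \<and> (\<exists>(u :: real ^ 'n) (w :: nat \<Rightarrow> real).
      \<forall>k\<in>Jset r nn. u \<bullet> rv (nuN \<rho> k) + w (fst k) \<le> \<omega> k \<and>
                    (k \<in> F \<longleftrightarrow> u \<bullet> rv (nuN \<rho> k) + w (fst k) = \<omega> k))}"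

text \<open>T_max as a simplicial complex: all faces of the simplices {nu_{1,0},...,nu_{r,0}} \<union> sigma(1).\<close>
definition T_max :: "nat \<Rightarrow> (nat \<times> nat) set set \<Rightarrow> (nat \<times> nat) set set" where
  "T_max r cones = {F. \<exists>\<sigma>. maximal_cone cones \<sigma> \<and> F \<subseteq> {(i,0) | i. 1 \<le> i \<and> i \<le> r} \<union> \<sigma>}"

type_synonym mpoly = "((nat \<times> nat) \<Rightarrow>\<^sub>0 nat) \<Rightarrow>\<^sub>0 complex"

definition polyJ :: "(nat \<times> nat) set \<Rightarrow> mpoly set" where
  "polyJ J = {p :: mpoly. \<forall>m\<in>Poly_Mapping.keys p. Poly_Mapping.keys m \<subseteq> J}"

definition ideal_gen :: "(nat \<times> nat) set \<Rightarrow> mpoly set \<Rightarrow> mpoly set" where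
  "ideal_gen J G = {(\<Sum>g\<in>F. q g * g) | F q. finite F \<and> F \<subseteq> G \<and> (\<forall>g\<in>F. q g \<in> polyJ J)}"

definition ymono :: "((nat \<times> nat) \<Rightarrow>\<^sub>0 nat) \<Rightarrow> mpoly" where
  "ymono m = Poly_Mapping.single m 1"

definition expo :: "(nat \<times> nat) set \<Rightarrow> (nat \<times> nat \<Rightarrow> nat) \<Rightarrow> (nat \<times> nat) \<Rightarrow>\<^sub>0 nat" where
  "expo J f = (\<Sum>k\<in>J. Poly_Mapping.single k (f k))"

definition L_ext :: "(nat \<times> nat \<Rightarrow> int ^ 'n) \<Rightarrow> nat \<Rightarrow> (nat \<Rightarrow> nat) \<Rightarrow> (nat \<times> nat \<Rightarrow> int) set" where
  "L_ext \<rho> r nn = {l. (\<forall>k. k \<notin> Jset r nn \<longrightarrow> l k = 0) \<and>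
      (\<Sum>k\<in>Jset r nn. l k *s nuN \<rho> k) = 0 \<and>
      (\<forall>i\<in>{1..r}. (\<Sum>k\<in>{k\<in>Jset r nn. fst k = i}. l k) = 0)}"

definition toric_ideal :: "(nat \<times> nat \<Rightarrow> int ^ 'n) \<Rightarrow> nat \<Rightarrow> (nat \<Rightarrow> nat) \<Rightarrow> mpoly set" where
  "toric_ideal \<rho> r nn = ideal_gen (Jset r nn)
     {ymono (expo (Jset r nn) (\<lambda>k. nat (l k))) - ymono (expo (Jset r nn) (\<lambda>k. nat (- l k))) | l. l \<in> L_ext \<rho> r nn}"

definition weight :: "(nat \<times> nat \<Rightarrow> real) \<Rightarrow> ((nat \<times> nat) \<Rightarrow>\<^sub>0 nat) \<Rightarrow> real" where
  "weight \<omega> m = (\<Sum>k\<in>Poly_Mapping.keys m. \<omega> k * real (Poly_Mapping.lookup m k))"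

definition in_form :: "(nat \<times> nat \<Rightarrow> real) \<Rightarrow> mpoly \<Rightarrow> mpoly" where
  "in_form \<omega> f = (\<Sum>m\<in>{m\<in>Poly_Mapping.keys f. weight \<omega> m = Max (weight \<omega> ` Poly_Mapping.keys f)}.
                    Poly_Mapping.single m (Poly_Mapping.lookup f m))"

definition lead_ideal :: "(nat \<times> nat) set \<Rightarrow> (nat \<times> nat \<Rightarrow> real) \<Rightarrow> mpoly set \<Rightarrow> mpoly set" where
  "lead_ideal J \<omega> I = ideal_gen J (in_form \<omega> ` I)"

definition stanley_reisner :: "nat \<Rightarrow> (nat \<Rightarrow> nat) \<Rightarrow> (nat \<times> nat) set set \<Rightarrow> mpoly set" where
  "stanley_reisner r nn cones = ideal_gen (Jset r nn)
     {ymono (expo P (\<lambda>_. 1)) | P. primitive_collection (Rays r nn) cones P}"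

end

theory Submission
  imports Defs
begin

text \<open>Grade C[y_J] by N \<times> Z^r, giving y_{i,j} the degree \<nu>_{i,j}; then I_A is homogeneous,
  so in every degree the coefficients of an element of I_A sum to zero. If T_\<omega> = T_max,
  then for each maximal cone \<sigma> there is an affine function below \<omega> on A which agrees
  with \<omega> exactly on Z \<union> \<sigma>, where Z indexes the points \<nu>_{i,0}. Consequently a
  monomial supported on Z \<union> \<sigma> is the strict \<omega>-minimum of its degree and is never a
  leading term; every leading monomial therefore has a support meeting the rays in a non-cone,
  i.e. is divisible by a primitive monomial.
  Conversely, for a primitive collection P, completeness and smoothness write
  \<Sum>_{k\<in>P} \<rho>_k as a non-negative integer combination on some maximal cone \<sigma>; correcting the
  resulting relation on Z produces an element of L_ext whose negative part lies in Z \<union> \<sigma>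
  (nefness of the E_i makes the correction non-negative), and whose positive part divides
  y^P. Its binomial lies in I_A and has leading term dividing y^P.\<close>

lemma Jset_Sigma: "Jset r nn = (SIGMA i:{1..r}. {0..nn i})"
  by (auto simp: Jset_def)

lemma finite_Jset [simp]: "finite (Jset r nn)"
  by (simp add: Jset_Sigma)

lemma Rays_subset_Jset: "Rays r nn \<subseteq> Jset r nn"
  by (auto simp: Rays_def Jset_def)

lemma finite_Rays [simp]: "finite (Rays r nn)"
  using Rays_subset_Jset finite_Jset finite_subset by blast

lemma Jset_slice: "{k \<in> Jset r nn. fst k = i} = (if i \<in> {1..r} then Pair i ` {0..nn i} else {})"
  by (auto simp: Jset_def)

lemma sum_Jset_slice:
  "i \<in> {1..r} \<Longrightarrow> (\<Sum>k\<in>{k \<in> Jset r nn. fst k = i}. g k) = (\<Sum>j\<in>{0..nn i}. g (i, j))"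
  by (simp add: Jset_slice sum.reindex inj_on_def)

lemma sum_Jset: "(\<Sum>k\<in>Jset r nn. g k) = (\<Sum>i\<in>{1..r}. \<Sum>j\<in>{0..nn i}. g (i, j))"
  unfolding Jset_Sigma by (subst sum.Sigma) (auto simp: split_def)

lemma sum_if_mem_subset: "finite T \<Longrightarrow> S \<subseteq> T \<Longrightarrow> (\<Sum>k\<in>T. if k \<in> S then g k else 0) = sum g S"
  by (simp add: sum.inter_restrict[symmetric] Int_absorb1)

lemma polyJ_zero [simp]: "0 \<in> polyJ J"
  by (simp add: polyJ_def)

lemma polyJ_add: "p \<in> polyJ J \<Longrightarrow> q \<in> polyJ J \<Longrightarrow> p + q \<in> polyJ J"
  using keys_add[of p q] unfolding polyJ_def by blast

lemma polyJ_diff: "p \<in> polyJ J \<Longrightarrow> q \<in> polyJ J \<Longrightarrow> p - q \<in> polyJ J"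
  using keys_diff[of p q] unfolding polyJ_def by blast

lemma keys_add_nat:
  "Poly_Mapping.keys ((a :: 'a \<Rightarrow>\<^sub>0 nat) + b) = Poly_Mapping.keys a \<union> Poly_Mapping.keys b"
  by (auto simp: in_keys_iff lookup_add)

lemma polyJ_mult: "p \<in> polyJ J \<Longrightarrow> q \<in> polyJ J \<Longrightarrow> p * q \<in> polyJ J"
  using keys_mult[of p q] unfolding polyJ_def by (fastforce simp: keys_add_nat)

lemma polyJ_sum: "(\<And>x. x \<in> F \<Longrightarrow> f x \<in> polyJ J) \<Longrightarrow> sum f F \<in> polyJ J"
  by (induction F rule: infinite_finite_induct) (auto intro: polyJ_add)

lemma polyJ_single: "Poly_Mapping.keys m \<subseteq> J \<Longrightarrow> Poly_Mapping.single m c \<in> polyJ J"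
  by (simp add: polyJ_def)

lemma ideal_gen_base: "g \<in> G \<Longrightarrow> g \<in> ideal_gen J G"
  unfolding ideal_gen_def
  by (intro CollectI exI[of _ "{g}"] exI[of _ "\<lambda>_. 1"]) (auto simp: polyJ_def)

lemma ideal_gen_0: "0 \<in> ideal_gen J G"
  unfolding ideal_gen_def by (intro CollectI exI[of _ "{}"]) auto

lemma ideal_gen_add:
  assumes "f \<in> ideal_gen J G" "h \<in> ideal_gen J G"
  shows "f + h \<in> ideal_gen J G"
proof -
  obtain F1 q1 where F1: "f = (\<Sum>g\<in>F1. q1 g * g)" "finite F1" "F1 \<subseteq> G" "\<forall>g\<in>F1. q1 g \<in> polyJ J"
    using assms(1) unfolding ideal_gen_def by blast
  obtain F2 q2 where F2: "h = (\<Sum>g\<in>F2. q2 g * g)" "finite F2" "F2 \<subseteq> G" "\<forall>g\<in>F2. q2 g \<in> polyJ J"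
    using assms(2) unfolding ideal_gen_def by blast
  define q where "q g = (if g \<in> F1 then q1 g else 0) + (if g \<in> F2 then q2 g else 0)" for g
  have "(\<Sum>g\<in>F1 \<union> F2. q g * g)
      = (\<Sum>g\<in>F1 \<union> F2. if g \<in> F1 then q1 g * g else 0) + (\<Sum>g\<in>F1 \<union> F2. if g \<in> F2 then q2 g * g else 0)"
    unfolding sum.distrib[symmetric] by (rule sum.cong) (auto simp: q_def distrib_right)
  also have "\<dots> = f + h"
    using F1 F2 by (simp add: sum.If_cases Int_absorb1)
  finally show ?thesis
    using F1 F2 unfolding ideal_gen_def
    by (intro CollectI exI[of _ "F1 \<union> F2"] exI[of _ q]) (auto simp: q_def intro!: polyJ_add)
qed

lemma ideal_gen_sum: "(\<And>x. x \<in> F \<Longrightarrow> f x \<in> ideal_gen J G) \<Longrightarrow> sum f F \<in> ideal_gen J G"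
  by (induction F rule: infinite_finite_induct) (auto intro: ideal_gen_add ideal_gen_0)

lemma ideal_gen_mult:
  assumes "p \<in> polyJ J" "f \<in> ideal_gen J G"
  shows "p * f \<in> ideal_gen J G"
proof -
  obtain F q where F: "f = (\<Sum>g\<in>F. q g * g)" "finite F" "F \<subseteq> G" "\<forall>g\<in>F. q g \<in> polyJ J"
    using assms(2) unfolding ideal_gen_def by blast
  have "p * f = (\<Sum>g\<in>F. (p * q g) * g)"
    using F by (simp add: sum_distrib_left mult.assoc)
  then show ?thesis
    using F assms(1) unfolding ideal_gen_def
    by (intro CollectI exI[of _ F] exI[of _ "\<lambda>g. p * q g"]) (auto intro: polyJ_mult)
qed

lemma ideal_gen_subset_ideal_gen:
  assumes "G \<subseteq> ideal_gen J H"
  shows "ideal_gen J G \<subseteq> ideal_gen J H"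
proof
  fix f assume "f \<in> ideal_gen J G"
  then obtain F q where F: "f = (\<Sum>g\<in>F. q g * g)" "F \<subseteq> G" "\<forall>g\<in>F. q g \<in> polyJ J"
    unfolding ideal_gen_def by blast
  show "f \<in> ideal_gen J H"
    unfolding F(1) using F(2,3) assms by (auto intro!: ideal_gen_sum ideal_gen_mult)
qed

lemma ideal_gen_subset_polyJ: "G \<subseteq> polyJ J \<Longrightarrow> ideal_gen J G \<subseteq> polyJ J"
  unfolding ideal_gen_def by (auto intro!: polyJ_sum polyJ_mult)

lemma poly_mapping_sum_single:
  "(p :: 'a \<Rightarrow>\<^sub>0 'b :: comm_monoid_add)
     = (\<Sum>m\<in>Poly_Mapping.keys p. Poly_Mapping.single m (Poly_Mapping.lookup p m))"
proof (rule poly_mapping_eqI)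
  fix k
  have "(\<Sum>m\<in>Poly_Mapping.keys p. Poly_Mapping.lookup (Poly_Mapping.single m (Poly_Mapping.lookup p m)) k)
      = Poly_Mapping.lookup p k"
    by (simp add: lookup_single when_def in_keys_iff)
  then show "Poly_Mapping.lookup p k
      = Poly_Mapping.lookup (\<Sum>m\<in>Poly_Mapping.keys p. Poly_Mapping.single m (Poly_Mapping.lookup p m)) k"
    by (simp add: lookup_sum)
qed

lemma lookup_expo: "finite J \<Longrightarrow> Poly_Mapping.lookup (expo J f) k = (if k \<in> J then f k else 0)"
  unfolding expo_def by (simp add: lookup_sum lookup_single when_def)

lemma keys_expo: "finite J \<Longrightarrow> Poly_Mapping.keys (expo J f) \<subseteq> J"
  by (auto simp: in_keys_iff lookup_expo split: if_splits)

lemma ymono_in_polyJ: "Poly_Mapping.keys m \<subseteq> J \<Longrightarrow> ymono m \<in> polyJ J"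
  unfolding ymono_def by (rule polyJ_single)

lemma single_in_ideal_gen_if_ymono_dvd:
  assumes "ymono u \<in> ideal_gen J G" "\<And>k. Poly_Mapping.lookup u k \<le> Poly_Mapping.lookup m k"
    and "Poly_Mapping.keys m \<subseteq> J"
  shows "Poly_Mapping.single m c \<in> ideal_gen J G"
proof -
  have "m = (m - u) + u"
    using assms(2) by (intro poly_mapping_eqI) (simp add: lookup_add lookup_minus)
  then have "Poly_Mapping.single m c = Poly_Mapping.single (m - u) c * ymono u"
    by (metis mult_single mult.right_neutral ymono_def)
  moreover have "Poly_Mapping.keys (m - u) \<subseteq> J"
    using assms(3) by (auto simp: in_keys_iff lookup_minus)
  ultimately show ?thesis
    using assms(1) by (simp add: ideal_gen_mult polyJ_single)
qed

lemma weight_superset: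
  assumes "finite S" "Poly_Mapping.keys m \<subseteq> S"
  shows "weight \<omega> m = (\<Sum>k\<in>S. \<omega> k * real (Poly_Mapping.lookup m k))"
  unfolding weight_def
  by (rule sum.mono_neutral_left) (use assms in \<open>auto simp: in_keys_iff\<close>)

lemma in_form_binomial:
  assumes "weight \<omega> v < weight \<omega> u"
  shows "in_form \<omega> (ymono u - ymono v) = ymono u"
proof -
  let ?g = "ymono u - ymono v"
  have uv: "u \<noteq> v" using assms by auto
  have lookup_g: "Poly_Mapping.lookup ?g x = (if x = u then 1 else 0) - (if x = v then 1 else 0)" for x
    by (simp add: ymono_def lookup_minus lookup_single when_def)
  have keys_g: "Poly_Mapping.keys ?g = {u, v}"
    using uv by (auto simp: in_keys_iff lookup_g split: if_splits)
  have "Max (weight \<omega> ` Poly_Mapping.keys ?g) = weight \<omega> u"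
    unfolding keys_g using assms by (intro Max_eqI) auto
  then have "{m \<in> Poly_Mapping.keys ?g. weight \<omega> m = Max (weight \<omega> ` Poly_Mapping.keys ?g)} = {u}"
    unfolding keys_g using assms by auto
  then show ?thesis
    unfolding in_form_def using uv by (simp add: lookup_g) (simp add: ymono_def)
qed

section \<open>The A-grading\<close>

definition Adeg :: "(nat \<times> nat \<Rightarrow> int ^ 'n) \<Rightarrow> (nat \<times> nat) set \<Rightarrow> ((nat \<times> nat) \<Rightarrow>\<^sub>0 nat)
    \<Rightarrow> (int ^ 'n) \<times> (nat \<Rightarrow> nat)" where
  "Adeg \<rho> J m = ((\<Sum>k\<in>J. int (Poly_Mapping.lookup m k) *s nuN \<rho> k),
                  (\<lambda>i. \<Sum>k\<in>{k\<in>J. fst k = i}. Poly_Mapping.lookup m k))"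

lemma Adeg_add: "Adeg \<rho> J (m + n) = (fst (Adeg \<rho> J m) + fst (Adeg \<rho> J n),
    \<lambda>i. snd (Adeg \<rho> J m) i + snd (Adeg \<rho> J n) i)"
  by (simp add: Adeg_def lookup_add vector_sadd_rdistrib sum.distrib)

lemma Adeg_add_cong: "Adeg \<rho> J u = Adeg \<rho> J v \<Longrightarrow> Adeg \<rho> J (n + u) = Adeg \<rho> J (n + v)"
  by (simp add: Adeg_add)

lemma Adeg_eq_iff_L_ext:
  assumes "Poly_Mapping.keys u \<subseteq> Jset r nn" "Poly_Mapping.keys v \<subseteq> Jset r nn"
  shows "Adeg \<rho> (Jset r nn) u = Adeg \<rho> (Jset r nn) v
     \<longleftrightarrow> (\<lambda>k. int (Poly_Mapping.lookup u k) - int (Poly_Mapping.lookup v k)) \<in> L_ext \<rho> r nn"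
proof -
  let ?J = "Jset r nn" and ?l = "\<lambda>k. int (Poly_Mapping.lookup u k) - int (Poly_Mapping.lookup v k)"
  have out: "\<forall>k. k \<notin> ?J \<longrightarrow> ?l k = 0"
    using assms by (metis diff_self in_keys_iff subsetD)
  have N: "(\<Sum>k\<in>?J. ?l k *s nuN \<rho> k) = fst (Adeg \<rho> ?J u) - fst (Adeg \<rho> ?J v)"
    by (simp add: Adeg_def vector_sub_rdistrib sum_subtractf)
  have Z: "(\<Sum>k\<in>{k\<in>?J. fst k = i}. ?l k) = int (snd (Adeg \<rho> ?J u) i) - int (snd (Adeg \<rho> ?J v) i)" for i
    by (simp add: Adeg_def sum_subtractf)
  have "snd (Adeg \<rho> ?J u) i = snd (Adeg \<rho> ?J v) i" if "i \<notin> {1..r}" for i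
    using that by (auto simp: Adeg_def Jset_slice)
  then have "snd (Adeg \<rho> ?J u) = snd (Adeg \<rho> ?J v)
      \<longleftrightarrow> (\<forall>i\<in>{1..r}. (\<Sum>k\<in>{k\<in>?J. fst k = i}. ?l k) = 0)"
    unfolding Z fun_eq_iff by auto
  moreover have "fst (Adeg \<rho> ?J u) = fst (Adeg \<rho> ?J v) \<longleftrightarrow> (\<Sum>k\<in>?J. ?l k *s nuN \<rho> k) = 0"
    unfolding N by simp
  ultimately show ?thesis
    unfolding L_ext_def prod_eq_iff mem_Collect_eq using out by blast
qed

lemma Adeg_L_ext_binomial:
  assumes "l \<in> L_ext \<rho> r nn"
  shows "Adeg \<rho> (Jset r nn) (expo (Jset r nn) (\<lambda>k. nat (l k)))
       = Adeg \<rho> (Jset r nn) (expo (Jset r nn) (\<lambda>k. nat (- l k)))"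
proof -
  have "(\<lambda>k. int (Poly_Mapping.lookup (expo (Jset r nn) (\<lambda>k. nat (l k))) k)
          - int (Poly_Mapping.lookup (expo (Jset r nn) (\<lambda>k. nat (- l k))) k)) = l"
    using assms by (auto simp: L_ext_def lookup_expo)
  moreover have keys: "Poly_Mapping.keys (expo (Jset r nn) f) \<subseteq> Jset r nn" for f
    by (simp add: keys_expo)
  ultimately show ?thesis
    using assms by (subst Adeg_eq_iff_L_ext[OF keys keys]) simp
qed

definition degree_coeff_sum :: "(nat \<times> nat \<Rightarrow> int ^ 'n) \<Rightarrow> (nat \<times> nat) set
    \<Rightarrow> (int ^ 'n) \<times> (nat \<Rightarrow> nat) \<Rightarrow> mpoly \<Rightarrow> complex" where
  "degree_coeff_sum \<rho> J b f =
     (\<Sum>m\<in>Poly_Mapping.keys f. if Adeg \<rho> J m = b then Poly_Mapping.lookup f m else 0)"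

lemma degree_coeff_sum_zero [simp]: "degree_coeff_sum \<rho> J b 0 = 0"
  by (simp add: degree_coeff_sum_def)

lemma degree_coeff_sum_single:
  "degree_coeff_sum \<rho> J b (Poly_Mapping.single m c) = (if Adeg \<rho> J m = b then c else 0)"
  by (simp add: degree_coeff_sum_def)

lemma degree_coeff_sum_superset:
  assumes "finite S" "Poly_Mapping.keys f \<subseteq> S"
  shows "degree_coeff_sum \<rho> J b f = (\<Sum>m\<in>S. if Adeg \<rho> J m = b then Poly_Mapping.lookup f m else 0)"
  unfolding degree_coeff_sum_def
  by (rule sum.mono_neutral_left) (use assms in \<open>auto simp: in_keys_iff\<close>)

lemma degree_coeff_sum_add:
  "degree_coeff_sum \<rho> J b (f + g) = degree_coeff_sum \<rho> J b f + degree_coeff_sum \<rho> J b g"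
proof -
  let ?S = "Poly_Mapping.keys f \<union> Poly_Mapping.keys g"
  have "degree_coeff_sum \<rho> J b (f + g)
      = (\<Sum>m\<in>?S. if Adeg \<rho> J m = b then Poly_Mapping.lookup (f + g) m else 0)"
    using keys_add[of f g] by (intro degree_coeff_sum_superset) auto
  also have "\<dots> = (\<Sum>m\<in>?S. if Adeg \<rho> J m = b then Poly_Mapping.lookup f m else 0)
       + (\<Sum>m\<in>?S. if Adeg \<rho> J m = b then Poly_Mapping.lookup g m else 0)"
    by (simp add: lookup_add sum.distrib[symmetric] if_distrib cong: if_cong)
  also have "\<dots> = degree_coeff_sum \<rho> J b f + degree_coeff_sum \<rho> J b g"
    by (subst (1 2) degree_coeff_sum_superset[of ?S]) auto
  finally show ?thesis .
qed

lemma degree_coeff_sum_diff: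
  "degree_coeff_sum \<rho> J b (f - g) = degree_coeff_sum \<rho> J b f - degree_coeff_sum \<rho> J b g"
  using degree_coeff_sum_add[of \<rho> J b "f - g" g] by simp

lemma degree_coeff_sum_sum:
  "degree_coeff_sum \<rho> J b (\<Sum>x\<in>F. f x) = (\<Sum>x\<in>F. degree_coeff_sum \<rho> J b (f x))"
  by (induction F rule: infinite_finite_induct) (simp_all add: degree_coeff_sum_add)

lemma degree_coeff_sum_mult_ymono:
  "degree_coeff_sum \<rho> J b (q * ymono u) = (\<Sum>n\<in>Poly_Mapping.keys q.
     if Adeg \<rho> J (n + u) = b then Poly_Mapping.lookup q n else 0)"
proof -
  have "q * ymono u = (\<Sum>n\<in>Poly_Mapping.keys q. Poly_Mapping.single (n + u) (Poly_Mapping.lookup q n))"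
    by (subst poly_mapping_sum_single[of q]) (simp add: sum_distrib_right ymono_def mult_single)
  then show ?thesis
    by (simp add: degree_coeff_sum_sum degree_coeff_sum_single)
qed

lemma degree_coeff_sum_ideal_gen_binomials:
  assumes "\<And>g. g \<in> G \<Longrightarrow> \<exists>u v. g = ymono u - ymono v \<and> Adeg \<rho> J u = Adeg \<rho> J v"
    and "f \<in> ideal_gen J' G"
  shows "degree_coeff_sum \<rho> J b f = 0"
proof -
  obtain F q where F: "f = (\<Sum>g\<in>F. q g * g)" "F \<subseteq> G"
    using assms(2) unfolding ideal_gen_def by blast
  have "degree_coeff_sum \<rho> J b (q g * g) = 0" if gF: "g \<in> F" for g
  proof -
    obtain u v where g: "g = ymono u - ymono v" and uv: "Adeg \<rho> J u = Adeg \<rho> J v"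
      using assms(1) F(2) gF by blast
    have "Adeg \<rho> J (n + u) = Adeg \<rho> J (n + v)" for n
      using uv by (rule Adeg_add_cong)
    then show ?thesis
      unfolding g by (simp add: right_diff_distrib degree_coeff_sum_diff degree_coeff_sum_mult_ymono)
  qed
  then show ?thesis
    unfolding F(1) degree_coeff_sum_sum by simp
qed

lemma degree_coeff_sum_toric_ideal:
  assumes "f \<in> toric_ideal \<rho> r nn"
  shows "degree_coeff_sum \<rho> (Jset r nn) b f = 0"
  by (rule degree_coeff_sum_ideal_gen_binomials[OF _ assms[unfolded toric_ideal_def]])
    (use Adeg_L_ext_binomial in blast)

lemma degree_coeff_sum_eq_0_imp_other_key:
  assumes "degree_coeff_sum \<rho> J (Adeg \<rho> J m) f = 0" "m \<in> Poly_Mapping.keys f"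
  shows "\<exists>n\<in>Poly_Mapping.keys f. n \<noteq> m \<and> Adeg \<rho> J n = Adeg \<rho> J m"
proof -
  define g where "g n = (if Adeg \<rho> J n = Adeg \<rho> J m then Poly_Mapping.lookup f n else 0)" for n
  have "g m + sum g (Poly_Mapping.keys f - {m}) = 0"
    using assms unfolding degree_coeff_sum_def g_def[abs_def] by (simp add: sum.remove)
  moreover have "g m \<noteq> 0"
    using assms(2) by (simp add: g_def in_keys_iff)
  ultimately have "sum g (Poly_Mapping.keys f - {m}) \<noteq> 0"
    by auto
  then obtain n where "n \<in> Poly_Mapping.keys f - {m}" "g n \<noteq> 0"
    using sum.not_neutral_contains_not_neutral by blast
  then show ?thesis
    by (auto simp: g_def split: if_splits)
qed

lemma toric_ideal_subset_polyJ: "toric_ideal \<rho> r nn \<subseteq> polyJ (Jset r nn)"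
  unfolding toric_ideal_def
  by (rule ideal_gen_subset_polyJ) (auto intro!: polyJ_diff ymono_in_polyJ keys_expo)

lemma exists_maximal_cone_superset:
  assumes "finite cones" "\<sigma>\<^sub>0 \<in> cones"
  shows "\<exists>\<sigma>. maximal_cone cones \<sigma> \<and> \<sigma>\<^sub>0 \<subseteq> \<sigma>"
proof -
  obtain \<sigma> where "\<sigma> \<in> {\<tau>\<in>cones. \<sigma>\<^sub>0 \<subseteq> \<tau>}" "\<forall>\<tau>\<in>{\<tau>\<in>cones. \<sigma>\<^sub>0 \<subseteq> \<tau>}. \<sigma> \<subseteq> \<tau> \<longrightarrow> \<sigma> = \<tau>"
    using finite_has_maximal[of "{\<tau>\<in>cones. \<sigma>\<^sub>0 \<subseteq> \<tau>}"] assms by auto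
  then show ?thesis
    unfolding maximal_cone_def by blast
qed

lemma exists_primitive_collection_subset:
  assumes "finite S" "S \<subseteq> R" "S \<notin> cones"
  shows "\<exists>P\<subseteq>S. primitive_collection R cones P"
proof -
  have "finite {Q. Q \<subseteq> S \<and> Q \<notin> cones}"
    using assms(1) by (rule rev_finite_subset[OF finite_Pow_iff[THEN iffD2]]) auto
  then obtain P where P: "P \<in> {Q. Q \<subseteq> S \<and> Q \<notin> cones}"
      "\<forall>Q\<in>{Q. Q \<subseteq> S \<and> Q \<notin> cones}. Q \<subseteq> P \<longrightarrow> P = Q"
    using finite_has_minimal[of "{Q. Q \<subseteq> S \<and> Q \<notin> cones}"] assms(3) by auto
  then have "P \<subseteq> S" "P \<notin> cones" "\<And>Q. Q \<subset> P \<Longrightarrow> Q \<in> cones"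
    by auto
  then show ?thesis
    using assms(2) unfolding primitive_collection_def by auto
qed

lemma single_in_stanley_reisner:
  assumes "primitive_collection (Rays r nn) cones P" "P \<subseteq> Poly_Mapping.keys m"
    and "Poly_Mapping.keys m \<subseteq> Jset r nn"
  shows "Poly_Mapping.single m c \<in> stanley_reisner r nn cones"
  unfolding stanley_reisner_def
proof (rule single_in_ideal_gen_if_ymono_dvd[OF _ _ assms(3)])
  show "ymono (expo P (\<lambda>_. 1)) \<in> ideal_gen (Jset r nn)
      {ymono (expo P (\<lambda>_. 1)) | P. primitive_collection (Rays r nn) cones P}"
    using assms(1) by (intro ideal_gen_base) blast
  have "finite P"
    using assms(1) finite_Rays finite_subset unfolding primitive_collection_def by blast
  then show "Poly_Mapping.lookup (expo P (\<lambda>_. 1)) k \<le> Poly_Mapping.lookup m k" for k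
    using assms(2) by (auto simp: lookup_expo in_keys_iff Suc_leI)
qed

lemma rv_sum_scale: "rv (\<Sum>k\<in>S. c k *s v k) = (\<Sum>k\<in>S. real_of_int (c k) *\<^sub>R rv (v k))"
  by (simp add: rv_def vec_eq_iff)

lemma independent_image_sum_eq_0:
  fixes f :: "'a \<Rightarrow> 'b :: real_vector"
  assumes "finite S" "inj_on f S" "independent (f ` S)" "(\<Sum>k\<in>S. a k *\<^sub>R f k) = 0" "k \<in> S"
  shows "a k = 0"
proof -
  define c where "c x = a (inv_into S f x)" for x
  have "(\<Sum>x\<in>f ` S. c x *\<^sub>R x) = (\<Sum>k\<in>S. a k *\<^sub>R f k)"
    using assms(2) by (simp add: sum.reindex c_def)
  then have "(\<Sum>x\<in>f ` S. c x *\<^sub>R x) = 0"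
    using assms(4) by simp
  then have "c (f k) = 0"
    using real_vector.independentD[OF assms(3) finite_imageI[OF assms(1)] order_refl] assms(5) by blast
  then show ?thesis
    using assms(2,5) by (simp add: c_def)
qed

lemma z_basis_integral_coords:
  assumes "z_basis B" "rv v = (\<Sum>b\<in>B. e b *\<^sub>R rv b)"
  obtains d where "v = (\<Sum>b\<in>B. d b *s b)" "\<And>b. b \<in> B \<Longrightarrow> real_of_int (d b) = e b"
proof -
  obtain d where d: "v = (\<Sum>b\<in>B. d b *s b)"
    using assms(1) unfolding z_basis_def by blast
  have "(\<Sum>b\<in>B. (real_of_int (d b) - e b) *\<^sub>R rv b) = 0"
    using assms(2) unfolding d rv_sum_scale by (simp add: scaleR_diff_left sum_subtractf)
  then have "real_of_int (d b) = e b" if "b \<in> B" for b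
    using independent_image_sum_eq_0[of B rv "\<lambda>b. real_of_int (d b) - e b" b] assms(1) that
    unfolding z_basis_def by simp
  then show ?thesis
    using d that by blast
qed

lemma nef_divisor_relation_le:
  fixes \<rho> :: "nat \<times> nat \<Rightarrow> int ^ 'n"
  assumes "nef_divisor \<rho> R cones d" "maximal_cone cones \<sigma>" "P \<subseteq> R"
    and "(\<Sum>k\<in>P. \<rho> k) = (\<Sum>k\<in>\<sigma>. a k *s \<rho> k)"
  shows "(\<Sum>k\<in>\<sigma>. a k * d k) \<le> (\<Sum>k\<in>P. d k)"
proof -
  obtain m :: "real ^ 'n" where on_\<sigma>: "\<forall>k\<in>\<sigma>. m \<bullet> rv (\<rho> k) = - real_of_int (d k)"
    and on_R: "\<forall>k\<in>R. m \<bullet> rv (\<rho> k) \<ge> - real_of_int (d k)"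
    using assms(1,2) unfolding nef_divisor_def by blast
  have "- real_of_int (\<Sum>k\<in>P. d k) \<le> (\<Sum>k\<in>P. m \<bullet> rv (\<rho> k))"
    using on_R assms(3) by (auto simp: sum_negf[symmetric] intro!: sum_mono)
  also have "\<dots> = m \<bullet> rv (\<Sum>k\<in>P. 1 *s \<rho> k)"
    unfolding rv_sum_scale by (simp add: inner_sum_right)
  also have "\<dots> = (\<Sum>k\<in>\<sigma>. real_of_int (a k) * (m \<bullet> rv (\<rho> k)))"
    using assms(4) by (simp add: rv_sum_scale inner_sum_right)
  also have "\<dots> = - real_of_int (\<Sum>k\<in>\<sigma>. a k * d k)"
    using on_\<sigma> by (simp add: sum_negf[symmetric])
  finally show ?thesis
    by (simp only: neg_le_iff_le of_int_le_iff)
qed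

section \<open>Leading terms for a weight inducing T_max\<close>

locale Tmax_weight =
  fixes \<rho> :: "nat \<times> nat \<Rightarrow> int ^ 'n" and r :: nat and nn :: "nat \<Rightarrow> nat"
    and cones :: "(nat \<times> nat) set set" and \<omega> :: "nat \<times> nat \<Rightarrow> real"
  assumes fan: "is_fan \<rho> (Rays r nn) cones"
    and smooth: "smooth_fan \<rho> (Rays r nn) cones"
    and complete: "complete_fan \<rho> cones"
    and nef: "nef_partition \<rho> r nn cones"
    and subdivision_eq_T_max: "reg_subdiv \<rho> r nn \<omega> = T_max r cones"
begin

abbreviation "J \<equiv> Jset r nn"
abbreviation "R \<equiv> Rays r nn"
abbreviation "Z \<equiv> {(i, 0) | i. 1 \<le> i \<and> i \<le> r}"

lemma cone_subset_Rays: "\<sigma> \<in> cones \<Longrightarrow> \<sigma> \<subseteq> R"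
  using fan unfolding is_fan_def by simp

lemma face_in_cones: "\<sigma> \<in> cones \<Longrightarrow> \<tau> \<subseteq> \<sigma> \<Longrightarrow> \<tau> \<in> cones"
  using fan unfolding is_fan_def by simp

lemma finite_cones: "finite cones"
  using fan unfolding is_fan_def by simp

lemma J_eq_Z_Un_R: "J = Z \<union> R"
  by (auto simp: Jset_def Rays_def)

lemma Z_Int_R: "Z \<inter> R = {}"
  by (auto simp: Rays_def)

lemma nuN_Z: "k \<in> Z \<Longrightarrow> nuN \<rho> k = 0"
  by (auto simp: nuN_def)

lemma nuN_R: "k \<in> R \<Longrightarrow> nuN \<rho> k = \<rho> k"
  by (auto simp: nuN_def Rays_def)

lemma maximal_cell_functional:
  assumes "maximal_cone cones \<sigma>"
  shows "\<exists>(u :: real ^ 'n) w. \<forall>k\<in>J. u \<bullet> rv (nuN \<rho> k) + w (fst k) \<le> \<omega> k \<and>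
           (k \<in> Z \<union> \<sigma> \<longleftrightarrow> u \<bullet> rv (nuN \<rho> k) + w (fst k) = \<omega> k)"
proof -
  have "Z \<union> \<sigma> \<in> T_max r cones"
    unfolding T_max_def using assms by blast
  then show ?thesis
    unfolding subdivision_eq_T_max[symmetric] reg_subdiv_def by simp
qed

lemma cone_relation_eq_0:
  assumes "\<sigma> \<in> cones" "(\<Sum>k\<in>\<sigma>. c k *s \<rho> k) = 0" "k \<in> \<sigma>"
  shows "c k = 0"
proof -
  have \<sigma>R: "\<sigma> \<subseteq> R"
    using assms(1) by (rule cone_subset_Rays)
  then have "finite \<sigma>"
    using finite_subset[OF _ finite_Rays] by blast
  obtain B where B: "z_basis B" "\<rho> ` \<sigma> \<subseteq> B"
    using smooth assms(1) unfolding smooth_fan_def by blast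
  have "inj_on \<rho> \<sigma>"
    using smooth \<sigma>R unfolding smooth_fan_def by (auto intro: inj_on_subset)
  moreover have "inj_on rv (\<rho> ` \<sigma>)"
    using B inj_on_subset[of rv B] unfolding z_basis_def by blast
  ultimately have inj: "inj_on (rv \<circ> \<rho>) \<sigma>"
    by (rule comp_inj_on)
  have indep: "independent ((rv \<circ> \<rho>) ` \<sigma>)"
  proof (rule real_vector.independent_mono)
    show "independent (rv ` B)"
      using B(1) unfolding z_basis_def by blast
    show "(rv \<circ> \<rho>) ` \<sigma> \<subseteq> rv ` B"
      using B(2) by auto
  qed
  have "rv (\<Sum>k\<in>\<sigma>. c k *s \<rho> k) = 0"
    using assms(2) by (simp add: rv_def vec_eq_iff)
  then have "(\<Sum>k\<in>\<sigma>. real_of_int (c k) *\<^sub>R (rv \<circ> \<rho>) k) = 0"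
    by (simp add: rv_sum_scale)
  then show ?thesis
    using independent_image_sum_eq_0[OF \<open>finite \<sigma>\<close> inj indep, of "\<lambda>k. real_of_int (c k)" k] assms(3)
    by simp
qed

lemma L_ext_supported_on_cone_eq_0:
  assumes l: "l \<in> L_ext \<rho> r nn" and "\<sigma> \<in> cones" and supp: "\<And>k. l k \<noteq> 0 \<Longrightarrow> k \<in> Z \<union> \<sigma>"
  shows "l k = 0"
proof -
  have \<sigma>R: "\<sigma> \<subseteq> R"
    using assms(2) by (rule cone_subset_Rays)
  then have "\<sigma> \<subseteq> J"
    using Rays_subset_Jset by blast
  have "(\<Sum>k\<in>J. l k *s nuN \<rho> k) = (\<Sum>k\<in>\<sigma>. l k *s nuN \<rho> k)"
  proof (rule sum.mono_neutral_right)
    show "\<forall>k\<in>J - \<sigma>. l k *s nuN \<rho> k = 0"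
    proof
      fix k assume "k \<in> J - \<sigma>"
      then have "l k = 0 \<or> k \<in> Z"
        using supp by blast
      then show "l k *s nuN \<rho> k = 0"
        using nuN_Z by auto
    qed
  qed (use \<open>\<sigma> \<subseteq> J\<close> in auto)
  also have "\<dots> = (\<Sum>k\<in>\<sigma>. l k *s \<rho> k)"
    using \<sigma>R nuN_R by (intro sum.cong) auto
  finally have "(\<Sum>k\<in>\<sigma>. l k *s \<rho> k) = 0"
    using l unfolding L_ext_def by simp
  then have on_\<sigma>: "l k = 0" if "k \<in> \<sigma>" for k
    using cone_relation_eq_0[OF assms(2)] that by blast
  show ?thesis
  proof (cases "k \<in> Z")
    case True
    then obtain i where k: "k = (i, 0)" and i: "i \<in> {1..r}"
      by auto
    have "(\<Sum>j\<in>{0..nn i}. l (i, j)) = (\<Sum>j\<in>{0}. l (i, j))"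
      using supp on_\<sigma> by (intro sum.mono_neutral_right) auto
    then show ?thesis
      using l i k unfolding L_ext_def by (simp add: sum_Jset_slice)
  qed (use supp on_\<sigma> in blast)
qed

lemma L_ext_affine_sum_eq_0:
  assumes "l \<in> L_ext \<rho> r nn"
  shows "(\<Sum>k\<in>J. real_of_int (l k) * (u \<bullet> rv (nuN \<rho> k) + w (fst k))) = 0"
proof -
  have N: "(\<Sum>k\<in>J. l k *s nuN \<rho> k) = 0" and Zs: "\<forall>i\<in>{1..r}. (\<Sum>k\<in>{k\<in>J. fst k = i}. l k) = 0"
    using assms unfolding L_ext_def by blast+
  have "(\<Sum>k\<in>J. real_of_int (l k) * (u \<bullet> rv (nuN \<rho> k))) = u \<bullet> rv (\<Sum>k\<in>J. l k *s nuN \<rho> k)"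
    by (simp add: rv_sum_scale inner_sum_right)
  also have "\<dots> = 0"
    unfolding N by (simp add: rv_def inner_vec_def)
  finally have 1: "(\<Sum>k\<in>J. real_of_int (l k) * (u \<bullet> rv (nuN \<rho> k))) = 0" .
  have "(\<Sum>k\<in>J. real_of_int (l k) * w (fst k))
      = (\<Sum>i\<in>{1..r}. w i * real_of_int (\<Sum>k\<in>{k\<in>J. fst k = i}. l k))"
    by (simp add: sum_Jset sum_Jset_slice sum_distrib_left mult.commute)
  also have "\<dots> = 0"
    using Zs by simp
  finally show ?thesis
    using 1 by (simp add: distrib_left sum.distrib)
qed

lemma weight_le_in_fiber:
  assumes \<sigma>: "maximal_cone cones \<sigma>" and m: "Poly_Mapping.keys m \<subseteq> Z \<union> \<sigma>"
    and n: "Poly_Mapping.keys n \<subseteq> J" and deg: "Adeg \<rho> J n = Adeg \<rho> J m"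
  shows "weight \<omega> m \<le> weight \<omega> n"
    and "weight \<omega> m = weight \<omega> n \<Longrightarrow> Poly_Mapping.keys n \<subseteq> Z \<union> \<sigma>"
proof -
  obtain u :: "real ^ 'n" and w where cell_functional: "\<forall>k\<in>J. u \<bullet> rv (nuN \<rho> k) + w (fst k) \<le> \<omega> k \<and>
      (k \<in> Z \<union> \<sigma> \<longleftrightarrow> u \<bullet> rv (nuN \<rho> k) + w (fst k) = \<omega> k)"
    using maximal_cell_functional[OF \<sigma>] by blast
  define h where "h k = u \<bullet> rv (nuN \<rho> k) + w (fst k)" for k
  have below: "h k \<le> \<omega> k" if "k \<in> J" for k
    using bspec[OF cell_functional that] unfolding h_def by (rule conjunct1)
  have cell: "k \<in> Z \<union> \<sigma> \<longleftrightarrow> h k = \<omega> k" if "k \<in> J" for k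
    using bspec[OF cell_functional that] unfolding h_def by (rule conjunct2)
  have "\<sigma> \<subseteq> R"
    using \<sigma> cone_subset_Rays unfolding maximal_cone_def by simp
  then have "Z \<union> \<sigma> \<subseteq> J"
    unfolding J_eq_Z_Un_R by blast
  with m have mJ: "Poly_Mapping.keys m \<subseteq> J"
    by (rule subset_trans)
  have "real (Poly_Mapping.lookup m k) * h k = \<omega> k * real (Poly_Mapping.lookup m k)" if "k \<in> J" for k
  proof (cases "k \<in> Poly_Mapping.keys m")
    case True
    then show ?thesis
      using m cell[OF that] by auto
  qed (simp add: in_keys_iff)
  then have hm: "(\<Sum>k\<in>J. real (Poly_Mapping.lookup m k) * h k) = weight \<omega> m"
    unfolding weight_superset[OF finite_Jset mJ] by (rule sum.cong[OF refl])
  define l where "l k = int (Poly_Mapping.lookup n k) - int (Poly_Mapping.lookup m k)" for k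
  have "l \<in> L_ext \<rho> r nn"
    using deg Adeg_eq_iff_L_ext[OF n mJ, where \<rho> = \<rho>] unfolding l_def by simp
  then have "(\<Sum>k\<in>J. real_of_int (l k) * h k) = 0"
    unfolding h_def by (rule L_ext_affine_sum_eq_0)
  then have "(\<Sum>k\<in>J. real (Poly_Mapping.lookup n k) * h k) = weight \<omega> m"
    using hm unfolding l_def by (simp add: left_diff_distrib sum_subtractf)
  then have gap: "weight \<omega> n - weight \<omega> m = (\<Sum>k\<in>J. (\<omega> k - h k) * real (Poly_Mapping.lookup n k))"
    unfolding weight_superset[OF finite_Jset n] by (simp add: algebra_simps sum_subtractf)
  have gap_nonneg: "0 \<le> (\<omega> k - h k) * real (Poly_Mapping.lookup n k)" if "k \<in> J" for k
    using below[OF that] by simp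
  show "weight \<omega> m \<le> weight \<omega> n"
    using gap gap_nonneg sum_nonneg[of J "\<lambda>k. (\<omega> k - h k) * real (Poly_Mapping.lookup n k)"] by simp
  assume "weight \<omega> m = weight \<omega> n"
  then have gap_0: "(\<omega> k - h k) * real (Poly_Mapping.lookup n k) = 0" if "k \<in> J" for k
    using gap gap_nonneg that by (simp add: sum_nonneg_eq_0_iff)
  show "Poly_Mapping.keys n \<subseteq> Z \<union> \<sigma>"
  proof
    fix k assume k: "k \<in> Poly_Mapping.keys n"
    then have "k \<in> J"
      using n by blast
    moreover from this have "h k = \<omega> k"
      using gap_0[OF \<open>k \<in> J\<close>] k by (auto simp: in_keys_iff)
    ultimately show "k \<in> Z \<union> \<sigma>"
      by (rule iffD2[OF cell])
  qed
qed

lemma weight_lt_other_in_fiber: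
  assumes \<sigma>: "maximal_cone cones \<sigma>" and m: "Poly_Mapping.keys m \<subseteq> Z \<union> \<sigma>"
    and n: "Poly_Mapping.keys n \<subseteq> J" and deg: "Adeg \<rho> J n = Adeg \<rho> J m" and "n \<noteq> m"
  shows "weight \<omega> m < weight \<omega> n"
proof -
  have "weight \<omega> m \<noteq> weight \<omega> n"
  proof
    assume "weight \<omega> m = weight \<omega> n"
    then have n_cell: "Poly_Mapping.keys n \<subseteq> Z \<union> \<sigma>"
      by (rule weight_le_in_fiber(2)[OF assms(1-4)])
    define l where "l k = int (Poly_Mapping.lookup n k) - int (Poly_Mapping.lookup m k)" for k
    have "Z \<union> \<sigma> \<subseteq> J"
      using \<sigma> cone_subset_Rays unfolding maximal_cone_def J_eq_Z_Un_R by blast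
    then have "l \<in> L_ext \<rho> r nn"
      using deg Adeg_eq_iff_L_ext[OF n, of m \<rho>] m unfolding l_def by auto
    moreover have "l k \<noteq> 0 \<Longrightarrow> k \<in> Poly_Mapping.keys n \<union> Poly_Mapping.keys m" for k
      unfolding l_def by (auto simp: in_keys_iff)
    then have "l k \<noteq> 0 \<Longrightarrow> k \<in> Z \<union> \<sigma>" for k
      using m n_cell by blast
    ultimately have "l k = 0" for k
      using \<sigma> unfolding maximal_cone_def by (intro L_ext_supported_on_cone_eq_0) auto
    then have "n = m"
      unfolding l_def by (intro poly_mapping_eqI) simp
    with \<open>n \<noteq> m\<close> show False ..
  qed
  then show ?thesis
    using weight_le_in_fiber(1)[OF assms(1-4)] by simp
qed

lemma in_form_term_in_stanley_reisner:
  assumes f: "f \<in> toric_ideal \<rho> r nn" and m: "m \<in> Poly_Mapping.keys f"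
    and max: "weight \<omega> m = Max (weight \<omega> ` Poly_Mapping.keys f)"
  shows "Poly_Mapping.single m c \<in> stanley_reisner r nn cones"
proof -
  have keys_J: "Poly_Mapping.keys n \<subseteq> J" if "n \<in> Poly_Mapping.keys f" for n
    using f that toric_ideal_subset_polyJ unfolding polyJ_def by blast
  show ?thesis
  proof (cases "Poly_Mapping.keys m \<inter> R \<in> cones")
    case False
    then obtain P where "P \<subseteq> Poly_Mapping.keys m \<inter> R" "primitive_collection R cones P"
      using exists_primitive_collection_subset[of "Poly_Mapping.keys m \<inter> R" R cones] by auto
    then show ?thesis
      using keys_J[OF m] by (intro single_in_stanley_reisner) auto
  next
    case True
    then obtain \<sigma> where \<sigma>: "maximal_cone cones \<sigma>" "Poly_Mapping.keys m \<inter> R \<subseteq> \<sigma>"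
      using exists_maximal_cone_superset[OF finite_cones] by blast
    have "Poly_Mapping.keys m \<subseteq> Z \<union> \<sigma>"
      using keys_J[OF m] \<sigma>(2) unfolding J_eq_Z_Un_R by blast
    obtain n where n: "n \<in> Poly_Mapping.keys f" "n \<noteq> m" "Adeg \<rho> J n = Adeg \<rho> J m"
      using degree_coeff_sum_eq_0_imp_other_key[OF degree_coeff_sum_toric_ideal[OF f] m] by blast
    have "weight \<omega> m < weight \<omega> n"
      by (rule weight_lt_other_in_fiber[OF \<sigma>(1) \<open>Poly_Mapping.keys m \<subseteq> Z \<union> \<sigma>\<close> keys_J[OF n(1)] n(3,2)])
    moreover have "weight \<omega> n \<le> Max (weight \<omega> ` Poly_Mapping.keys f)"
      using n(1) by (intro Max_ge) auto
    ultimately show ?thesis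
      using max by simp
  qed
qed

lemma lead_ideal_subset_stanley_reisner:
  "lead_ideal J \<omega> (toric_ideal \<rho> r nn) \<subseteq> stanley_reisner r nn cones"
proof -
  have "in_form \<omega> f \<in> stanley_reisner r nn cones" if "f \<in> toric_ideal \<rho> r nn" for f
    unfolding in_form_def stanley_reisner_def
    by (rule ideal_gen_sum) (use in_form_term_in_stanley_reisner[OF that] in \<open>auto simp: stanley_reisner_def\<close>)
  then show ?thesis
    unfolding lead_ideal_def stanley_reisner_def by (intro ideal_gen_subset_ideal_gen) auto
qed

lemma point_in_maximal_cone:
  obtains \<sigma> c where "maximal_cone cones \<sigma>" "\<forall>k\<in>\<sigma>. 0 \<le> c k" "x = (\<Sum>k\<in>\<sigma>. c k *\<^sub>R rv (\<rho> k))"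
proof -
  have "x \<in> (\<Union>\<sigma>\<in>cones. cone_of \<rho> \<sigma>)"
    using complete unfolding complete_fan_def by simp
  then obtain \<sigma>\<^sub>0 c where \<sigma>\<^sub>0: "\<sigma>\<^sub>0 \<in> cones" and c: "x = (\<Sum>k\<in>\<sigma>\<^sub>0. c k *\<^sub>R rv (\<rho> k))" "\<forall>k\<in>\<sigma>\<^sub>0. 0 \<le> c k"
    unfolding cone_of_def by blast
  obtain \<sigma> where \<sigma>: "maximal_cone cones \<sigma>" "\<sigma>\<^sub>0 \<subseteq> \<sigma>"
    using exists_maximal_cone_superset[OF finite_cones \<sigma>\<^sub>0] by blast
  then have "\<sigma> \<subseteq> R"
    using cone_subset_Rays unfolding maximal_cone_def by simp
  then have "finite \<sigma>"
    by (rule finite_subset) simp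
  have "\<forall>k\<in>\<sigma>. 0 \<le> (if k \<in> \<sigma>\<^sub>0 then c k else 0)"
    using c(2) by simp
  moreover have "x = (\<Sum>k\<in>\<sigma>. (if k \<in> \<sigma>\<^sub>0 then c k else 0) *\<^sub>R rv (\<rho> k))"
    unfolding c(1) using \<sigma>(2) \<open>finite \<sigma>\<close> by (intro sum.mono_neutral_cong_left) auto
  ultimately show ?thesis
    by (rule that[OF \<sigma>(1)])
qed

lemma lattice_point_in_maximal_cone:
  fixes v :: "int ^ 'n"
  obtains \<sigma> a where "maximal_cone cones \<sigma>" "\<forall>k\<in>\<sigma>. 0 \<le> a k" "v = (\<Sum>k\<in>\<sigma>. a k *s \<rho> k)"
proof -
  obtain \<sigma> c where \<sigma>: "maximal_cone cones \<sigma>" and c: "\<forall>k\<in>\<sigma>. 0 \<le> c k"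
    and v: "rv v = (\<Sum>k\<in>\<sigma>. c k *\<^sub>R rv (\<rho> k))"
    by (rule point_in_maximal_cone)
  then have "\<sigma> \<subseteq> R" "\<sigma> \<in> cones"
    using cone_subset_Rays unfolding maximal_cone_def by auto
  then have inj: "inj_on \<rho> \<sigma>"
    using smooth unfolding smooth_fan_def by (auto intro: inj_on_subset)
  obtain B where B: "z_basis B" "\<rho> ` \<sigma> \<subseteq> B"
    using smooth \<open>\<sigma> \<in> cones\<close> unfolding smooth_fan_def by blast
  then have "finite B"
    unfolding z_basis_def by simp
  define e where "e b = (if b \<in> \<rho> ` \<sigma> then c (inv_into \<sigma> \<rho> b) else 0)" for b
  have "(\<Sum>b\<in>B. e b *\<^sub>R rv b) = (\<Sum>b\<in>\<rho> ` \<sigma>. e b *\<^sub>R rv b)"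
    using \<open>finite B\<close> B(2) by (intro sum.mono_neutral_right) (auto simp: e_def)
  also have "\<dots> = rv v"
    unfolding v using inj by (simp add: sum.reindex e_def)
  finally obtain d where d: "v = (\<Sum>b\<in>B. d b *s b)" "\<And>b. b \<in> B \<Longrightarrow> real_of_int (d b) = e b"
    using z_basis_integral_coords[OF B(1) sym] by blast
  show ?thesis
  proof (rule that[OF \<sigma>])
    show "\<forall>k\<in>\<sigma>. 0 \<le> d (\<rho> k)"
    proof
      fix k assume "k \<in> \<sigma>"
      then have "real_of_int (d (\<rho> k)) = c k"
        using d(2)[of "\<rho> k"] B(2) inj by (auto simp: e_def)
      moreover have "0 \<le> c k"
        using c \<open>k \<in> \<sigma>\<close> by blast
      ultimately show "0 \<le> d (\<rho> k)"
        by simp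
    qed
    have "d b = 0" if "b \<in> B - \<rho> ` \<sigma>" for b
      using d(2)[of b] that by (simp add: e_def)
    then have "v = (\<Sum>b\<in>\<rho> ` \<sigma>. d b *s b)"
      unfolding d(1) using \<open>finite B\<close> B(2) by (intro sum.mono_neutral_right) auto
    also have "\<dots> = (\<Sum>k\<in>\<sigma>. d (\<rho> k) *s \<rho> k)"
      using inj by (simp add: sum.reindex)
    finally show "v = (\<Sum>k\<in>\<sigma>. d (\<rho> k) *s \<rho> k)" .
  qed
qed

lemma N_relation_lift_in_L_ext:
  assumes c_R: "\<And>k. k \<notin> R \<Longrightarrow> c k = 0" and c_rel: "(\<Sum>k\<in>R. c k *s \<rho> k) = 0"
  defines "t i \<equiv> \<Sum>k\<in>R. if fst k = i then c k else 0"
  shows "(\<lambda>k. c k - (if k \<in> Z then t (fst k) else 0)) \<in> L_ext \<rho> r nn"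
proof -
  define l where "l k = c k - (if k \<in> Z then t (fst k) else 0)" for k
  have "l k = 0" if "k \<notin> J" for k
    using that c_R unfolding l_def J_eq_Z_Un_R by auto
  moreover have "(\<Sum>k\<in>J. l k *s nuN \<rho> k) = 0"
  proof -
    have "(\<Sum>k\<in>J. l k *s nuN \<rho> k) = (\<Sum>k\<in>R. l k *s nuN \<rho> k)"
      using Rays_subset_Jset nuN_Z unfolding J_eq_Z_Un_R by (intro sum.mono_neutral_right) auto
    also have "\<dots> = (\<Sum>k\<in>R. c k *s \<rho> k)"
      using Z_Int_R nuN_R unfolding l_def by (intro sum.cong) auto
    finally show ?thesis
      using c_rel by simp
  qed
  moreover have "(\<Sum>k\<in>{k\<in>J. fst k = i}. l k) = 0" if i: "i \<in> {1..r}" for i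
  proof -
    have "(\<Sum>k\<in>{k\<in>J. fst k = i}. c k) = (\<Sum>k\<in>J. if fst k = i then c k else 0)"
      by (simp add: sum.inter_filter)
    also have "\<dots> = t i"
      unfolding t_def using Rays_subset_Jset c_R by (intro sum.mono_neutral_right) auto
    finally have "(\<Sum>k\<in>{k\<in>J. fst k = i}. c k) = t i" .
    moreover have "(\<Sum>k\<in>{k\<in>J. fst k = i}. if k \<in> Z then t (fst k) else 0) = t i"
      using i by (simp add: sum_Jset_slice)
    ultimately show ?thesis
      unfolding l_def by (simp add: sum_subtractf)
  qed
  ultimately show ?thesis
    unfolding L_ext_def l_def[symmetric] by blast
qed

lemma block_excess_nonneg:
  assumes \<sigma>: "maximal_cone cones \<sigma>" and PR: "P \<subseteq> R"
    and rel: "(\<Sum>k\<in>P. \<rho> k) = (\<Sum>k\<in>\<sigma>. a k *s \<rho> k)" and i: "i \<in> {1..r}"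
  shows "0 \<le> (\<Sum>k\<in>R. if fst k = i then (if k \<in> P then 1 else 0) - (if k \<in> \<sigma> then a k else 0) else 0)"
proof -
  define d :: "nat \<times> nat \<Rightarrow> int" where "d k = (if fst k = i then 1 else 0)" for k
  have \<sigma>R: "\<sigma> \<subseteq> R"
    using \<sigma> cone_subset_Rays unfolding maximal_cone_def by simp
  have "nef_divisor \<rho> R cones d"
    using nef i unfolding nef_partition_def d_def by simp
  then have "(\<Sum>k\<in>\<sigma>. a k * d k) \<le> (\<Sum>k\<in>P. d k)"
    using \<sigma> PR rel by (rule nef_divisor_relation_le)
  moreover have "(if fst k = i then (if k \<in> P then 1 else 0) - (if k \<in> \<sigma> then a k else 0) else 0)
      = (if k \<in> P then d k else 0) - (if k \<in> \<sigma> then a k * d k else 0)" for k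
    by (simp add: d_def)
  then have "(\<Sum>k\<in>R. if fst k = i then (if k \<in> P then 1 else 0) - (if k \<in> \<sigma> then a k else 0) else 0)
      = (\<Sum>k\<in>P. d k) - (\<Sum>k\<in>\<sigma>. a k * d k)"
    using PR \<sigma>R by (simp add: sum_subtractf sum_if_mem_subset)
  ultimately show ?thesis
    by simp
qed

text \<open>The relation is \<Sum>_{k\<in>P} \<rho>_k - \<Sum>_{k\<in>\<sigma>} a_k \<rho>_k, corrected at (i,0) by the excess of
  P over \<sigma> in the i-th block; that excess is non-negative because E_i is nef.\<close>
lemma primitive_collection_relation:
  assumes P: "primitive_collection R cones P"
  obtains \<sigma> l where "maximal_cone cones \<sigma>" "l \<in> L_ext \<rho> r nn"
    "\<And>k. l k \<le> (if k \<in> P then 1 else 0)" "\<And>k. l k < 0 \<Longrightarrow> k \<in> Z \<union> \<sigma>" "\<exists>k. l k \<noteq> 0"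
proof -
  have PR: "P \<subseteq> R" and P_not_cone: "P \<notin> cones"
    using P unfolding primitive_collection_def by auto
  obtain \<sigma> a where \<sigma>: "maximal_cone cones \<sigma>" and a: "\<forall>k\<in>\<sigma>. 0 \<le> a k"
    and rel: "(\<Sum>k\<in>P. \<rho> k) = (\<Sum>k\<in>\<sigma>. a k *s \<rho> k)"
    by (rule lattice_point_in_maximal_cone)
  have \<sigma>R: "\<sigma> \<subseteq> R"
    using \<sigma> cone_subset_Rays unfolding maximal_cone_def by simp
  define c where "c k = (if k \<in> P then 1 else 0) - (if k \<in> \<sigma> then a k else 0)" for k
  define t where "t i = (\<Sum>k\<in>R. if fst k = i then c k else 0)" for i
  define l where "l k = c k - (if k \<in> Z then t (fst k) else 0)" for k
  have "c k *s \<rho> k = (if k \<in> P then \<rho> k else 0) - (if k \<in> \<sigma> then a k *s \<rho> k else 0)" for k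
    by (simp add: c_def vector_sub_rdistrib)
  then have "(\<Sum>k\<in>R. c k *s \<rho> k) = (\<Sum>k\<in>P. \<rho> k) - (\<Sum>k\<in>\<sigma>. a k *s \<rho> k)"
    using PR \<sigma>R by (simp add: sum_subtractf sum_if_mem_subset)
  then have "(\<Sum>k\<in>R. c k *s \<rho> k) = 0"
    using rel by simp
  moreover have "c k = 0" if "k \<notin> R" for k
    using that PR \<sigma>R by (auto simp: c_def)
  ultimately have L: "l \<in> L_ext \<rho> r nn"
    unfolding l_def t_def by (intro N_relation_lift_in_L_ext)
  have t_nonneg: "0 \<le> t i" if "i \<in> {1..r}" for i
    unfolding t_def c_def using \<sigma> PR rel that by (rule block_excess_nonneg)
  have "l k \<le> c k" for k
    using t_nonneg unfolding l_def by auto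
  moreover have "c k \<le> (if k \<in> P then 1 else 0)" for k
    using a unfolding c_def by auto
  ultimately have bound: "l k \<le> (if k \<in> P then 1 else 0)" for k
    using order_trans by blast
  have l_off_cell: "l k = (if k \<in> P then 1 else 0)" if "k \<notin> Z" "k \<notin> \<sigma>" for k
    unfolding l_def c_def if_not_P[OF that(1)] if_not_P[OF that(2)] by simp
  have neg: "k \<in> Z \<union> \<sigma>" if "l k < 0" for k
  proof (rule ccontr)
    assume "k \<notin> Z \<union> \<sigma>"
    then have "k \<notin> Z" "k \<notin> \<sigma>"
      by (simp_all only: Un_iff de_Morgan_disj not_False_eq_True)
    then have "l k = (if k \<in> P then 1 else 0)"
      by (rule l_off_cell)
    with that show False
      by (simp split: if_splits)
  qed
  have "\<not> P \<subseteq> \<sigma>"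
    using P_not_cone \<sigma> face_in_cones unfolding maximal_cone_def by blast
  then obtain k where "k \<in> P" "k \<notin> \<sigma>"
    by blast
  moreover have "k \<notin> Z"
    using \<open>k \<in> P\<close> PR Z_Int_R by blast
  ultimately have "l k = 1"
    using l_off_cell by simp
  then have "\<exists>k. l k \<noteq> 0"
    by (intro exI[of _ k]) simp
  with \<sigma> L bound neg show ?thesis
    by (rule that)
qed

lemma in_form_L_ext_binomial:
  assumes \<sigma>: "maximal_cone cones \<sigma>" and l: "l \<in> L_ext \<rho> r nn"
    and neg: "\<And>k. l k < 0 \<Longrightarrow> k \<in> Z \<union> \<sigma>" and nonzero: "\<exists>k. l k \<noteq> 0"
  defines "u \<equiv> expo J (\<lambda>k. nat (l k))" and "v \<equiv> expo J (\<lambda>k. nat (- l k))"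
  shows "in_form \<omega> (ymono u - ymono v) = ymono u"
proof (rule in_form_binomial)
  have keys_v: "Poly_Mapping.keys v \<subseteq> Z \<union> \<sigma>"
  proof
    fix k assume "k \<in> Poly_Mapping.keys v"
    then have "l k < 0"
      by (auto simp: v_def in_keys_iff lookup_expo split: if_splits)
    then show "k \<in> Z \<union> \<sigma>"
      by (rule neg)
  qed
  have "u \<noteq> v"
  proof
    assume "u = v"
    have "l k = 0" for k
    proof (cases "k \<in> J")
      case True
      then have "nat (l k) = nat (- l k)"
        using arg_cong[OF \<open>u = v\<close>, of "\<lambda>p. Poly_Mapping.lookup p k"] by (simp add: u_def v_def lookup_expo)
      then show ?thesis
        by arith
    next
      case False
      then show ?thesis
        using l unfolding L_ext_def by blast
    qed
    with nonzero show False
      by blast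
  qed
  moreover have "Adeg \<rho> J u = Adeg \<rho> J v"
    unfolding u_def v_def by (rule Adeg_L_ext_binomial[OF l])
  moreover have "Poly_Mapping.keys u \<subseteq> J"
    unfolding u_def by (rule keys_expo[OF finite_Jset])
  ultimately show "weight \<omega> v < weight \<omega> u"
    using weight_lt_other_in_fiber[OF \<sigma> keys_v] by simp
qed

lemma primitive_monomial_in_lead_ideal:
  assumes P: "primitive_collection R cones P"
  shows "ymono (expo P (\<lambda>_. 1)) \<in> lead_ideal J \<omega> (toric_ideal \<rho> r nn)"
proof -
  obtain \<sigma> l where \<sigma>: "maximal_cone cones \<sigma>" and l: "l \<in> L_ext \<rho> r nn"
    and bound: "\<And>k. l k \<le> (if k \<in> P then 1 else 0)" and neg: "\<And>k. l k < 0 \<Longrightarrow> k \<in> Z \<union> \<sigma>"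
    and nonzero: "\<exists>k. l k \<noteq> 0"
    using primitive_collection_relation[OF P] by blast
  have "P \<subseteq> R"
    using P unfolding primitive_collection_def by simp
  then have "P \<subseteq> J" "finite P"
    using Rays_subset_Jset finite_subset[OF _ finite_Rays] by blast+
  define u where "u = expo J (\<lambda>k. nat (l k))"
  define v where "v = expo J (\<lambda>k. nat (- l k))"
  have "ymono u - ymono v \<in> toric_ideal \<rho> r nn"
    unfolding toric_ideal_def u_def v_def using l by (intro ideal_gen_base) blast
  moreover have "in_form \<omega> (ymono u - ymono v) = ymono u"
    unfolding u_def v_def using \<sigma> l neg nonzero by (rule in_form_L_ext_binomial)
  ultimately have "ymono u \<in> lead_ideal J \<omega> (toric_ideal \<rho> r nn)"
    unfolding lead_ideal_def by (intro ideal_gen_base) (metis image_eqI)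
  moreover have "Poly_Mapping.lookup u k \<le> Poly_Mapping.lookup (expo P (\<lambda>_. 1)) k" for k
    using bound[of k] \<open>finite P\<close> by (auto simp: u_def lookup_expo)
  moreover have "Poly_Mapping.keys (expo P (\<lambda>_. 1)) \<subseteq> J"
    using keys_expo[OF \<open>finite P\<close>] \<open>P \<subseteq> J\<close> by blast
  ultimately show ?thesis
    unfolding lead_ideal_def ymono_def[of "expo P (\<lambda>_. 1)"]
    by (rule single_in_ideal_gen_if_ymono_dvd)
qed

lemma stanley_reisner_subset_lead_ideal:
  "stanley_reisner r nn cones \<subseteq> lead_ideal J \<omega> (toric_ideal \<rho> r nn)"
  unfolding stanley_reisner_def lead_ideal_def
  by (rule ideal_gen_subset_ideal_gen)
    (use primitive_monomial_in_lead_ideal in \<open>auto simp: lead_ideal_def\<close>)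

lemma lead_ideal_eq_stanley_reisner:
  "lead_ideal J \<omega> (toric_ideal \<rho> r nn) = stanley_reisner r nn cones"
  using lead_ideal_subset_stanley_reisner stanley_reisner_subset_lead_ideal by (rule subset_antisym)

end

theorem mainTheorem6:
  fixes \<rho> :: "nat \<times> nat \<Rightarrow> int ^ 'n"
    and r :: nat and nn :: "nat \<Rightarrow> nat"
    and cones :: "(nat \<times> nat) set set"
    and \<omega> :: "nat \<times> nat \<Rightarrow> real"
  assumes "is_fan \<rho> (Rays r nn) cones"
    and "smooth_fan \<rho> (Rays r nn) cones"
    and "complete_fan \<rho> cones"
    and "projective_fan \<rho> (Rays r nn) cones"
    and "nef_partition \<rho> r nn cones"
    and "reg_subdiv \<rho> r nn \<omega> = T_max r cones"
  shows "lead_ideal (Jset r nn) \<omega> (toric_ideal \<rho> r nn) = stanley_reisner r nn cones"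
proof -
  interpret Tmax_weight \<rho> r nn cones \<omega>
    using assms(1-3,5,6) by unfold_locales
  show ?thesis
    by (rule lead_ideal_eq_stanley_reisner)
qed

end
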